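(* Let $P$ and $Q$ be probability measures on a measurable space $(\mathcal{X},\mathcal{A})$ with densities $f$ and $g$, respectively, with respect to a measure $\mu$ on $(\mathcal{X},\mathcal{A})$. Suppose that $g/f \le \rho$ for some number $\rho \in [1,\infty)$. (a) For any non-decreasing function $\psi : [0,\infty) \to \mathbb{R}$ with $\psi(1) = 0$, \[ \int \psi(g/f) \, dQ \ \le \ Q(\{g > f\}) \, \psi(\rho) . \] (b) For any convex function $\psi : [0,\infty) \to \mathbb{R}$, \[ \int \psi(g/f) \, dP \ \le \ \psi(0) + \frac{\psi(\rho) - \psi(0)}{\rho} . \] Both inequalities are equalities if $g/f$ takes only values in $\{0,\rho\}$.
   Context: Ratios use the conventions $0/0 := 0$ and $a/0 := \infty$ for $a > 0$. *)

theory Defs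
  imports "HOL-Probability.Probability_Measure"
begin

definition ratio :: "real \<Rightarrow> real \<Rightarrow> ereal" where
  "ratio a b = (if b = 0 then (if a = 0 then 0 else \<infinity>) else ereal (a / b))"

end

theory Submission
  imports Defs
begin

(* Put r = g/f. The bound gives g \<le> \<rho> f, so 0 \<le> r \<le> \<rho>, dQ = r dP and \<integral> r dP = 1.
   (a) Monotonicity and \<psi>(1) = 0 give \<psi>(r) \<le> \<psi>(\<rho>) 1{r > 1} pointwise, and {r > 1} = {g > f}.
   (b) On [0, \<rho>] a convex \<psi> lies below its chord, which is affine in r; integrating against P
   and using \<integral> r dP = 1 gives the bound. If r only takes the values 0 and \<rho>, both pointwise
   bounds are equalities (in (a) Q-almost surely, since Q{r = 0} = 0). *)

(* Unconditional, because both junk values agree: real_of_ereal \<infinity> = 0 and a / 0 = 0. *)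
lemma real_of_ereal_ratio: "real_of_ereal (ratio a b) = a / b"
  by (simp add: ratio_def)

lemma ratio_le_ereal_iff:
  assumes "0 \<le> a" "0 \<le> b" "0 \<le> \<rho>"
  shows "ratio a b \<le> ereal \<rho> \<longleftrightarrow> a \<le> \<rho> * b"
  using assms by (auto simp: ratio_def pos_divide_le_eq mult.commute)

lemma convex_on_Icc_bounded:
  fixes \<psi> :: "real \<Rightarrow> real"
  assumes "convex_on {a..b} \<psi>"
  shows "bounded (\<psi> ` {a..b})"
proof (cases "a \<le> b")
  case True
  define U where "U = max (\<psi> a) (\<psi> b)"
  have hull: "convex hull {a, b} = {a..b}"
    using True by (simp add: segment_convex_hull[symmetric] closed_segment_eq_real_ivl)
  have upper: "\<psi> t \<le> U" if "t \<in> {a..b}" for t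
    using convex_on_convex_hull_bound[of "{a, b}" \<psi> U] assms that by (auto simp: hull U_def)
  have lower: "2 * \<psi> ((a + b) / 2) - U \<le> \<psi> t" if t: "t \<in> {a..b}" for t
  proof -
    have mid: "(1 - 1/2) *\<^sub>R t + (1/2) *\<^sub>R (a + b - t) = (a + b) / 2"
      by (simp add: field_simps)
    have "\<psi> ((1 - 1/2) *\<^sub>R t + (1/2) *\<^sub>R (a + b - t)) \<le> (1 - 1/2) * \<psi> t + (1/2) * \<psi> (a + b - t)"
      by (rule convex_onD[OF assms]) (use t in auto)
    then have "\<psi> ((a + b) / 2) \<le> (1 - 1/2) * \<psi> t + (1/2) * \<psi> (a + b - t)"
      by (simp only: mid)
    moreover have "\<psi> (a + b - t) \<le> U"
      using upper t by simp
    ultimately show ?thesis by simp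
  qed
  show ?thesis
    unfolding bounded_real
    by (rule exI[of _ "\<bar>U\<bar> + \<bar>2 * \<psi> ((a + b) / 2) - U\<bar>"])
       (use upper lower in \<open>fastforce simp: abs_le_iff\<close>)
qed simp

lemma borel_measurable_convex_on_Icc:
  fixes \<psi> :: "real \<Rightarrow> real"
  assumes "convex_on {a..b} \<psi>"
  shows "\<psi> \<in> borel_measurable (restrict_space borel {a..b})"
proof (rule measurable_restrict_countable[of "{a, b} \<inter> {a..b}"])
  have "continuous_on {a<..<b} \<psi>"
    by (rule convex_on_continuous) (auto intro: convex_on_subset[OF assms])
  then have "\<psi> \<in> borel_measurable (restrict_space borel {a<..<b})"
    by (rule borel_measurable_continuous_on_restrict)
  moreover have "{a..b} \<inter> - ({a, b} \<inter> {a..b}) = {a<..<b}"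
    by auto
  ultimately show
    "\<psi> \<in> borel_measurable (restrict_space (restrict_space borel {a..b}) (- ({a, b} \<inter> {a..b})))"
    by (simp add: restrict_restrict_space)
qed (auto simp: sets_restrict_space)

lemma borel_measurable_comp_restrict_space:
  fixes \<psi> :: "real \<Rightarrow> real"
  assumes "\<psi> \<in> borel_measurable (restrict_space borel S)"
    and "r \<in> borel_measurable M" "\<And>x. x \<in> space M \<Longrightarrow> r x \<in> S"
  shows "(\<lambda>x. \<psi> (r x)) \<in> borel_measurable M"
  using measurable_compose[OF measurable_restrict_space2[of r M S borel] assms(1)] assms(2,3) by auto

lemma (in finite_measure) integrable_comp_bounded:
  fixes \<psi> :: "real \<Rightarrow> real"
  assumes "\<psi> \<in> borel_measurable (restrict_space borel S)" "bounded (\<psi> ` S)"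
    and "r \<in> borel_measurable M" "\<And>x. x \<in> space M \<Longrightarrow> r x \<in> S"
  shows "integrable M (\<lambda>x. \<psi> (r x))"
proof -
  obtain B where B: "\<And>t. t \<in> S \<Longrightarrow> \<bar>\<psi> t\<bar> \<le> B"
    using assms(2) by (auto simp: bounded_real)
  show ?thesis
    by (rule integrable_const_bound[where B = B])
       (use B assms(4) borel_measurable_comp_restrict_space[OF assms(1,3)] in auto)
qed

lemma mono_on_le_indicator_gt_1:
  fixes \<psi> :: "real \<Rightarrow> real"
  assumes "mono_on {0..\<rho>} \<psi>" "\<psi> 1 = 0" "1 \<le> \<rho>" "t \<in> {0..\<rho>}"
  shows "\<psi> t \<le> \<psi> \<rho> * indicator {1<..} t"
proof (cases "1 < t")
  case True
  then show ?thesis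
    using assms mono_onD[OF assms(1), of t \<rho>] by auto
next
  case False
  then show ?thesis
    using assms mono_onD[OF assms(1), of t 1] by auto
qed

lemma (in finite_measure) integral_mono_comp_le:
  fixes \<psi> :: "real \<Rightarrow> real"
  assumes \<psi>: "mono_on {0..\<rho>} \<psi>" "\<psi> 1 = 0" and "1 \<le> \<rho>"
    and r: "r \<in> borel_measurable M" "\<And>x. x \<in> space M \<Longrightarrow> r x \<in> {0..\<rho>}"
  defines "A \<equiv> {x \<in> space M. 1 < r x}"
  shows "(\<integral>x. \<psi> (r x) \<partial>M) \<le> measure M A * \<psi> \<rho>"
proof -
  have "bounded (\<psi> ` {0..\<rho>})"
    using \<psi>(1) \<open>1 \<le> \<rho>\<close>
    by (intro bounded_closed_interval[of "\<psi> 0" "\<psi> \<rho>", THEN bounded_subset])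
       (auto simp: image_subset_iff mono_on_def)
  then have "integrable M (\<lambda>x. \<psi> (r x))"
    by (rule integrable_comp_bounded[OF borel_measurable_mono_on_fnc[OF \<psi>(1)] _ r])
  moreover have "A \<in> sets M"
    unfolding A_def using r(1) by measurable
  ultimately have "(\<integral>x. \<psi> (r x) \<partial>M) \<le> (\<integral>x. \<psi> \<rho> * indicator A x \<partial>M)"
    using mono_on_le_indicator_gt_1[OF assms(1-3) r(2)]
    by (intro integral_mono integrable_mult_right integrable_real_indicator)
       (auto simp: A_def indicator_def emeasure_finite top.not_eq_extremum[symmetric])
  also have "\<dots> = measure M A * \<psi> \<rho>"
    using \<open>A \<in> sets M\<close> by simp
  finally show ?thesis .
qed

lemma (in finite_measure) integral_comp_eq_measure_if_AE_eq:
  fixes \<psi> :: "real \<Rightarrow> real"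
  assumes "\<psi> 1 = 0" "1 \<le> \<rho>"
    and "(\<lambda>x. \<psi> (r x)) \<in> borel_measurable M" "r \<in> borel_measurable M"
    and "AE x in M. r x = \<rho>"
  defines "A \<equiv> {x \<in> space M. 1 < r x}"
  shows "(\<integral>x. \<psi> (r x) \<partial>M) = measure M A * \<psi> \<rho>"
proof -
  have "A \<in> sets M"
    unfolding A_def using assms(4) by measurable
  have "(\<integral>x. \<psi> (r x) \<partial>M) = (\<integral>x. \<psi> \<rho> * indicator A x \<partial>M)"
  proof (rule integral_cong_AE)
    show "AE x in M. \<psi> (r x) = \<psi> \<rho> * indicator A x"
      using assms(5) AE_space
    proof eventually_elim
      case (elim x)
      then show ?case
        using assms(1,2) by (cases "\<rho> = 1") (auto simp: A_def)
    qed
  qed (use assms(3) \<open>A \<in> sets M\<close> in auto)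
  also have "\<dots> = measure M A * \<psi> \<rho>"
    using \<open>A \<in> sets M\<close> by simp
  finally show ?thesis .
qed

lemma (in prob_space) integral_convex_comp_le_chord:
  fixes \<psi> :: "real \<Rightarrow> real"
  assumes \<psi>: "convex_on {a..b} \<psi>"
    and r: "r \<in> borel_measurable M" "\<And>x. x \<in> space M \<Longrightarrow> r x \<in> {a..b}"
  shows "(\<integral>x. \<psi> (r x) \<partial>M) \<le> (\<psi> b - \<psi> a) / (b - a) * ((\<integral>x. r x \<partial>M) - a) + \<psi> a"
proof -
  have "integrable M r"
    using r by (intro integrable_const_bound[where B = "\<bar>a\<bar> + \<bar>b\<bar>"] AE_I2) force+
  moreover have "integrable M (\<lambda>x. \<psi> (r x))"
    using borel_measurable_convex_on_Icc[OF \<psi>] convex_on_Icc_bounded[OF \<psi>] r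
    by (rule integrable_comp_bounded)
  ultimately have "(\<integral>x. \<psi> (r x) \<partial>M) \<le> (\<integral>x. (\<psi> b - \<psi> a) / (b - a) * (r x - a) + \<psi> a \<partial>M)"
    using convex_onD_Icc'[OF \<psi> r(2)] by (intro integral_mono) auto
  also have "\<dots> = (\<psi> b - \<psi> a) / (b - a) * ((\<integral>x. r x \<partial>M) - a) + \<psi> a"
    using \<open>integrable M r\<close> by (simp add: prob_space right_diff_distrib)
  finally show ?thesis .
qed

lemma (in prob_space) integral_comp_eq_chord_if_two_valued:
  fixes \<psi> :: "real \<Rightarrow> real"
  assumes "(\<lambda>x. \<psi> (r x)) \<in> borel_measurable M" "r \<in> borel_measurable M"
    and two_valued: "AE x in M. r x \<in> {a, b}"
  shows "(\<integral>x. \<psi> (r x) \<partial>M) = (\<psi> b - \<psi> a) / (b - a) * ((\<integral>x. r x \<partial>M) - a) + \<psi> a"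
proof -
  have "integrable M r"
    using two_valued assms(2) by (intro integrable_const_bound[where B = "\<bar>a\<bar> + \<bar>b\<bar>"]) auto
  have "(\<integral>x. \<psi> (r x) \<partial>M) = (\<integral>x. (\<psi> b - \<psi> a) / (b - a) * (r x - a) + \<psi> a \<partial>M)"
  proof (rule integral_cong_AE)
    show "AE x in M. \<psi> (r x) = (\<psi> b - \<psi> a) / (b - a) * (r x - a) + \<psi> a"
      using two_valued by eventually_elim auto
  qed (use assms(1,2) in auto)
  also have "\<dots> = (\<psi> b - \<psi> a) / (b - a) * ((\<integral>x. r x \<partial>M) - a) + \<psi> a"
    using \<open>integrable M r\<close> by (simp add: prob_space right_diff_distrib)
  finally show ?thesis .
qed

lemma integral_density_ratio:
  fixes f g :: "'a \<Rightarrow> real"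
  assumes "f \<in> borel_measurable M" "g \<in> borel_measurable M"
    and "\<And>x. x \<in> space M \<Longrightarrow> 0 \<le> f x"
    and "\<And>x. x \<in> space M \<Longrightarrow> f x = 0 \<Longrightarrow> g x = 0"
  shows "(\<integral>x. g x / f x \<partial>density M f) = (\<integral>x. g x \<partial>M)"
proof -
  have "(\<integral>x. g x / f x \<partial>density M f) = (\<integral>x. f x * (g x / f x) \<partial>M)"
    using assms(1-3) by (subst integral_density) auto
  also have "\<dots> = (\<integral>x. g x \<partial>M)"
    using assms(4) by (intro Bochner_Integration.integral_cong) auto
  finally show ?thesis .
qed

lemma integral_eq_1_if_prob_space_density:
  fixes g :: "'a \<Rightarrow> real"
  assumes "prob_space (density M g)" "g \<in> borel_measurable M" "\<And>x. x \<in> space M \<Longrightarrow> 0 \<le> g x"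
  shows "(\<integral>x. g x \<partial>M) = 1"
proof -
  have "(\<integral>x. g x \<partial>M) = (\<integral>x. 1 \<partial>density M g)"
    using assms(2,3) by (subst integral_density) auto
  also have "\<dots> = 1"
    using prob_space.prob_space[OF assms(1)] by simp
  finally show ?thesis .
qed

locale bounded_density_ratio =
  fixes M :: "'a measure" and f g :: "'a \<Rightarrow> real" and \<rho> :: real
  assumes f_meas: "f \<in> borel_measurable M" and g_meas: "g \<in> borel_measurable M"
    and f_nn: "\<And>x. x \<in> space M \<Longrightarrow> 0 \<le> f x"
    and g_nn: "\<And>x. x \<in> space M \<Longrightarrow> 0 \<le> g x"
    and P_prob: "prob_space (density M (\<lambda>x. ennreal (f x)))"
    and Q_prob: "prob_space (density M (\<lambda>x. ennreal (g x)))"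
    and rho: "1 \<le> \<rho>"
    and bound: "\<And>x. x \<in> space M \<Longrightarrow> ratio (g x) (f x) \<le> ereal \<rho>"
begin

abbreviation "P \<equiv> density M (\<lambda>x. ennreal (f x))"
abbreviation "Q \<equiv> density M (\<lambda>x. ennreal (g x))"

definition lr :: "'a \<Rightarrow> real" where "lr x = g x / f x"

lemma g_le_rho_f: "x \<in> space M \<Longrightarrow> g x \<le> \<rho> * f x"
  using bound f_nn g_nn rho by (simp add: ratio_le_ereal_iff)

lemma g_eq_0_if_f_eq_0: "x \<in> space M \<Longrightarrow> f x = 0 \<Longrightarrow> g x = 0"
  using g_le_rho_f g_nn by (metis mult_zero_right order_antisym)

lemma lr_in_Icc:
  assumes "x \<in> space M"
  shows "lr x \<in> {0..\<rho>}"
  using g_le_rho_f[OF assms] f_nn[OF assms] g_nn[OF assms] rho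
  by (cases "f x = 0") (auto simp: lr_def divide_le_eq mult.commute)

lemma measurable_lr [measurable]: "lr \<in> borel_measurable M"
  unfolding lr_def using f_meas g_meas by measurable

lemma greater_iff_lr_gt_1: "{x \<in> space M. f x < g x} = {x \<in> space M. 1 < lr x}"
  using f_nn g_le_rho_f rho by (force simp: lr_def less_divide_eq)

lemma integral_lr: "(\<integral>x. lr x \<partial>P) = 1"
proof -
  have "(\<integral>x. lr x \<partial>P) = (\<integral>x. g x \<partial>M)"
    unfolding lr_def by (rule integral_density_ratio[OF f_meas g_meas f_nn g_eq_0_if_f_eq_0])
  also have "\<dots> = 1"
    by (rule integral_eq_1_if_prob_space_density[OF Q_prob g_meas g_nn])
  finally show ?thesis .
qed

lemma AE_lr_eq_rho_if_two_valued:
  assumes "\<And>x. x \<in> space M \<Longrightarrow> lr x \<in> {0, \<rho>}"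
  shows "AE x in Q. lr x = \<rho>"
proof -
  have "AE x in M. 0 < g x \<longrightarrow> lr x = \<rho>"
  proof (intro AE_I2 impI)
    fix x
    assume x: "x \<in> space M" and "0 < g x"
    then have "lr x \<noteq> 0"
      using g_eq_0_if_f_eq_0[OF x] by (auto simp: lr_def)
    then show "lr x = \<rho>"
      using assms[OF x] by simp
  qed
  then show ?thesis
    using g_meas by (subst AE_density) auto
qed

lemma integral_mono_lr_le:
  assumes "mono_on {0..} \<psi>" "\<psi> 1 = 0"
  shows "(\<integral>x. \<psi> (lr x) \<partial>Q) \<le> measure Q {x \<in> space M. f x < g x} * \<psi> \<rho>"
proof -
  interpret Q: prob_space Q by (rule Q_prob)
  have "mono_on {0..\<rho>} \<psi>"
    by (rule mono_on_subset[OF assms(1)]) auto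
  from Q.integral_mono_comp_le[OF this assms(2) rho, of lr] show ?thesis
    using lr_in_Icc by (simp add: greater_iff_lr_gt_1)
qed

lemma integral_mono_lr_eq_if_two_valued:
  assumes "mono_on {0..} \<psi>" "\<psi> 1 = 0" "\<And>x. x \<in> space M \<Longrightarrow> lr x \<in> {0, \<rho>}"
  shows "(\<integral>x. \<psi> (lr x) \<partial>Q) = measure Q {x \<in> space M. f x < g x} * \<psi> \<rho>"
proof -
  interpret Q: prob_space Q by (rule Q_prob)
  have mono: "mono_on {0..\<rho>} \<psi>"
    by (rule mono_on_subset[OF assms(1)]) auto
  have "(\<lambda>x. \<psi> (lr x)) \<in> borel_measurable M"
    using borel_measurable_mono_on_fnc[OF mono] measurable_lr lr_in_Icc
    by (rule borel_measurable_comp_restrict_space)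
  then have "(\<lambda>x. \<psi> (lr x)) \<in> borel_measurable Q"
    by simp
  from Q.integral_comp_eq_measure_if_AE_eq[OF assms(2) rho this _ AE_lr_eq_rho_if_two_valued[OF assms(3)]]
  show ?thesis
    by (simp add: greater_iff_lr_gt_1)
qed

lemma integral_convex_lr_le:
  assumes "convex_on {0..} \<psi>"
  shows "(\<integral>x. \<psi> (lr x) \<partial>P) \<le> \<psi> 0 + (\<psi> \<rho> - \<psi> 0) / \<rho>"
proof -
  interpret P: prob_space P by (rule P_prob)
  have "convex_on {0..\<rho>} \<psi>"
    by (rule convex_on_subset[OF assms]) auto
  from P.integral_convex_comp_le_chord[OF this, of lr] show ?thesis
    using lr_in_Icc integral_lr by (simp add: add.commute)
qed

lemma integral_convex_lr_eq_if_two_valued: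
  assumes "convex_on {0..} \<psi>" "\<And>x. x \<in> space M \<Longrightarrow> lr x \<in> {0, \<rho>}"
  shows "(\<integral>x. \<psi> (lr x) \<partial>P) = \<psi> 0 + (\<psi> \<rho> - \<psi> 0) / \<rho>"
proof -
  interpret P: prob_space P by (rule P_prob)
  have convex: "convex_on {0..\<rho>} \<psi>"
    by (rule convex_on_subset[OF assms(1)]) auto
  have "(\<lambda>x. \<psi> (lr x)) \<in> borel_measurable M"
    using borel_measurable_convex_on_Icc[OF convex] measurable_lr lr_in_Icc
    by (rule borel_measurable_comp_restrict_space)
  then have "(\<lambda>x. \<psi> (lr x)) \<in> borel_measurable P"
    by simp
  moreover have "AE x in P. lr x \<in> {0, \<rho>}"
    using assms(2) by (intro AE_I2) simp
  ultimately show ?thesis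
    using P.integral_comp_eq_chord_if_two_valued[where a = 0 and b = \<rho>] integral_lr
    by (simp add: add.commute)
qed

end

theorem proposition1:
  fixes M :: "'a measure" and f g :: "'a \<Rightarrow> real" and \<rho> :: real
  assumes f_meas: "f \<in> borel_measurable M" and g_meas: "g \<in> borel_measurable M"
    and f_nn: "\<And>x. x \<in> space M \<Longrightarrow> 0 \<le> f x"
    and g_nn: "\<And>x. x \<in> space M \<Longrightarrow> 0 \<le> g x"
    and P_prob: "prob_space (density M (\<lambda>x. ennreal (f x)))"
    and Q_prob: "prob_space (density M (\<lambda>x. ennreal (g x)))"
    and rho: "1 \<le> \<rho>"
    and bound: "\<And>x. x \<in> space M \<Longrightarrow> ratio (g x) (f x) \<le> ereal \<rho>"
  shows
    "(\<forall>\<psi> :: real \<Rightarrow> real. mono_on {0..} \<psi> \<and> \<psi> 1 = 0 \<longrightarrow>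
       integral\<^sup>L (density M (\<lambda>x. ennreal (g x))) (\<lambda>x. \<psi> (real_of_ereal (ratio (g x) (f x))))
       \<le> measure (density M (\<lambda>x. ennreal (g x))) {x \<in> space M. g x > f x} * \<psi> \<rho>) \<and>
    (\<forall>\<psi> :: real \<Rightarrow> real. convex_on {0..} \<psi> \<longrightarrow>
       integral\<^sup>L (density M (\<lambda>x. ennreal (f x))) (\<lambda>x. \<psi> (real_of_ereal (ratio (g x) (f x))))
       \<le> \<psi> 0 + (\<psi> \<rho> - \<psi> 0) / \<rho>) \<and>
    ((\<forall>x\<in>space M. ratio (g x) (f x) \<in> {0, ereal \<rho>}) \<longrightarrow>
     (\<forall>\<psi> :: real \<Rightarrow> real. mono_on {0..} \<psi> \<and> \<psi> 1 = 0 \<longrightarrow>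
       integral\<^sup>L (density M (\<lambda>x. ennreal (g x))) (\<lambda>x. \<psi> (real_of_ereal (ratio (g x) (f x))))
       = measure (density M (\<lambda>x. ennreal (g x))) {x \<in> space M. g x > f x} * \<psi> \<rho>) \<and>
     (\<forall>\<psi> :: real \<Rightarrow> real. convex_on {0..} \<psi> \<longrightarrow>
       integral\<^sup>L (density M (\<lambda>x. ennreal (f x))) (\<lambda>x. \<psi> (real_of_ereal (ratio (g x) (f x))))
       = \<psi> 0 + (\<psi> \<rho> - \<psi> 0) / \<rho>))"
proof -
  interpret bounded_density_ratio M f g \<rho>
    using assms by (rule bounded_density_ratio.intro)
  have lr_eq: "real_of_ereal (ratio (g x) (f x)) = lr x" for x
    by (simp add: lr_def real_of_ereal_ratio)
  have two_valued: "lr x \<in> {0, \<rho>}"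
    if "\<forall>x\<in>space M. ratio (g x) (f x) \<in> {0, ereal \<rho>}" "x \<in> space M" for x
    using that lr_eq[of x] by auto
  show ?thesis
    unfolding lr_eq
    using integral_mono_lr_le integral_convex_lr_le two_valued
      integral_mono_lr_eq_if_two_valued integral_convex_lr_eq_if_two_valued
    by blast
qed

end
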